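(* Let $n\ge2$, let $Q=[0,1]^2$ be the unit square, and let $P=\operatorname{conv}\big((Q\times\{0\}^{n-2})\cup\{e_3,\dots,e_n\}\big)\subset\mathbb{R}^n$ be the iterated pyramid over the unit square. Let $\chi$ be the Santaló point of $P$. Then $\operatorname{vol}(P)\operatorname{vol}(P^\chi)\le\dfrac{4n^{n+1}}{(n!)^2}$, with equality if and only if $n=2$ (i.e. $P$ is the unit square).
   Context: For a convex body $K$ with the origin in its interior, $K^*=\{y:\langle x,y\rangle\le1\ \forall x\in K\}$. The Santaló point of $P$ is the unique interior point $\chi$ minimizing $\operatorname{vol}((P-\chi)^* )$; $P^\chi=(P-\chi)^*$. $e_i$ denotes the $i$-th standard basis vector. *)

theory Defs
  imports "HOL-Analysis.Analysis"
begin

definition polar :: "('a::real_inner) set \<Rightarrow> 'a set" where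
  "polar K = {y. \<forall>x\<in>K. inner x y \<le> 1}"

definition santalo_point :: "('a::euclidean_space) set \<Rightarrow> 'a \<Rightarrow> bool" where
  "santalo_point P c \<longleftrightarrow> c \<in> interior P \<and>
     (\<forall>z\<in>interior P. measure lebesgue (polar ((\<lambda>x. x - c) ` P))
                      \<le> measure lebesgue (polar ((\<lambda>x. x - z) ` P)))"

definition sq_pyramid :: "'n::finite \<Rightarrow> 'n \<Rightarrow> (real^'n) set" where
  "sq_pyramid i j = convex hull
     ({x. 0 \<le> x$i \<and> x$i \<le> 1 \<and> 0 \<le> x$j \<and> x$j \<le> 1 \<and> (\<forall>k. k \<noteq> i \<and> k \<noteq> j \<longrightarrow> x$k = 0)}
      \<union> {axis k 1 | k. k \<noteq> i \<and> k \<noteq> j})"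

end

theory Submission
  imports Defs
begin

text \<open>
  Up to a set of measure zero, the pyramid is the union of two simplices of volume 1/n!, and the polar
  of P - z (for z in the interior) splits along the signs of the two square coordinates into four
  simplices; pulling them back to weighted standard simplices gives vol (P - z)^* in closed form.
  The Santalo point is never computed: its polar volume is at most that of the explicit interior
  point z with z_i = z_j = 3/(2(n+1)) and z_k = 1/(n+1) on the apex coordinates, which yields
  vol P vol P^chi \<le> 32 (n+1)^(n+1) / (27 (n!)^2). This is strictly below 4 n^(n+1)/(n!)^2 as
  soon as n \<ge> 3, while for n = 2 the closed form is at least 8 = 4 * 2^3/(2!)^2 at every interior
  point, with equality at the centre.
\<close>

section \<open>Lebesgue measure of linear images and of simplices\<close>

lemma measure_shear_image:
  fixes S :: "(real^'n::finite) set"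
  assumes "m \<noteq> n" and S: "S \<in> lmeasurable"
  defines "f \<equiv> \<lambda>x. \<chi> i. if i = m then x$m + x$n else x$i"
  shows "f ` S \<in> lmeasurable" and "measure lebesgue (f ` S) = measure lebesgue S"
proof -
  have lin: "linear f"
    unfolding f_def by (rule linearI) (auto simp: vec_eq_iff algebra_simps)
  have box: "measure lebesgue (f ` cbox a b) = measure lebesgue (cbox a b)" for a b
  proof (cases "cbox a b = {}")
    case False
    \<comment> \<open>the library's shear formula needs a nonnegative lower bound in coordinate n, so translate first\<close>
    define t :: "real^'n" where "t = - (a$n) *\<^sub>R axis n 1"
    have "f ` cbox (t + a) (t + b) = (+) (f t) ` f ` cbox a b"
      by (simp add: cbox_translation image_image linear_add[OF lin])
    then have "measure lebesgue (f ` cbox a b) = measure lebesgue (f ` cbox (t + a) (t + b))"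
      by (simp add: measure_translation)
    also have "\<dots> = measure lebesgue (cbox (t + a) (t + b))"
    proof -
      have "cbox (t + a) (t + b) \<noteq> {}"
        using False by (simp add: cbox_translation)
      then show ?thesis
        unfolding f_def by (rule measure_shear_interval[OF \<open>m \<noteq> n\<close>]) (simp add: t_def)
    qed
    also have "\<dots> = measure lebesgue (cbox a b)"
      by (simp only: cbox_translation measure_translation)
    finally show ?thesis .
  qed simp
  show "f ` S \<in> lmeasurable" "measure lebesgue (f ` S) = measure lebesgue S"
    using measure_linear_sufficient[OF lin S, of 1] box by auto
qed

lemma measure_swap_image:
  fixes S :: "(real^'n::finite) set" and m n :: 'n
  assumes S: "S \<in> lmeasurable"
  defines "g \<equiv> \<lambda>x. \<chi> i. x $ Transposition.transpose m n i"
  shows "g ` S \<in> lmeasurable" and "measure lebesgue (g ` S) = measure lebesgue S"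
proof -
  let ?\<tau> = "Transposition.transpose m n"
  have lin: "linear g"
    unfolding g_def by (rule linearI) (simp_all add: vec_eq_iff)
  have g_involutive: "g (g x) = x" for x
    by (simp add: g_def vec_eq_iff)
  have image_box: "g ` cbox a b = cbox (g a) (g b)" for a b
  proof -
    have "x \<in> g ` cbox a b \<longleftrightarrow> g x \<in> cbox a b" for x
      by (metis g_involutive image_iff)
    also have "g x \<in> cbox a b \<longleftrightarrow> x \<in> cbox (g a) (g b)" for x
      unfolding mem_box_cart g_def
      by (metis (no_types) transpose_involutory vec_lambda_beta)
    finally show ?thesis by blast
  qed
  have box: "measure lebesgue (g ` cbox a b) = measure lebesgue (cbox a b)" for a b
  proof (cases "cbox a b = {}")
    case False
    then have "cbox (g a) (g b) \<noteq> {}"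
      using image_box by auto
    moreover have "(\<Prod>i\<in>UNIV. (b - a) $ ?\<tau> i) = (\<Prod>i\<in>UNIV. (b - a) $ i)"
      using prod.permute[OF permutes_swap_id, of m UNIV n "\<lambda>i. (b - a) $ i"] by (simp add: o_def)
    ultimately show ?thesis
      using False unfolding image_box by (simp add: content_cbox_cart g_def)
  qed simp
  show "g ` S \<in> lmeasurable" "measure lebesgue (g ` S) = measure lebesgue S"
    using measure_linear_sufficient[OF lin S, of 1] box by auto
qed

lemma det_matrix_stretch: "det (matrix (\<lambda>x::real^'n::finite. \<chi> i. c i * x$i)) = prod c UNIV"
proof -
  have "matrix (\<lambda>x::real^'n. \<chi> i. c i * x$i) = (\<chi> i j. if i = j then c i else 0)"
    by (simp add: matrix_def vec_eq_iff axis_def)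
  then show ?thesis
    by (simp add: det_diagonal)
qed

lemma det_matrix_shear:
  fixes m n :: "'n::finite"
  assumes "m \<noteq> n"
  shows "det (matrix (\<lambda>x::real^'n. \<chi> i. if i = m then x$m + x$n else x$i)) = 1"
proof -
  have "matrix (\<lambda>x::real^'n. \<chi> i. if i = m then x$m + x$n else x$i)
      = (\<chi> k. if k = m then row m (mat 1) + 1 *s row n (mat 1) else row k (mat 1))"
    by (auto simp: matrix_def vec_eq_iff row_def mat_def axis_def)
  then show ?thesis
    using det_row_operation[OF assms, of "mat 1 :: real^'n^'n" 1] by simp
qed

lemma abs_det_matrix_swap:
  "\<bar>det (matrix (\<lambda>x::real^'n::finite. \<chi> i. x $ Transposition.transpose m n i))\<bar> = 1"
proof -
  have "orthogonal_transformation (\<lambda>x::real^'n. \<chi> i. x $ Transposition.transpose m n i)"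
    unfolding orthogonal_transformation_def
  proof (intro conjI allI)
    show "linear (\<lambda>x::real^'n. \<chi> i. x $ Transposition.transpose m n i)"
      by (rule linearI) (simp_all add: vec_eq_iff)
    show "(\<chi> i. v $ Transposition.transpose m n i) \<bullet> (\<chi> i. w $ Transposition.transpose m n i) = v \<bullet> w"
      for v w :: "real^'n"
      unfolding inner_vec_def
      using sum.permute[OF permutes_swap_id, of m UNIV n "\<lambda>i. v $ i \<bullet> w $ i"] by (simp add: o_def)
  qed
  then show ?thesis
    by simp
qed

text \<open>Unlike the library lemma measure_linear_image, this does not require a well-ordered index type.\<close>

proposition
  fixes f :: "real^'n::finite \<Rightarrow> real^'n"
  assumes "linear f" and "S \<in> lmeasurable"
  shows measurable_linear_image_cart: "f ` S \<in> lmeasurable"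
    and measure_linear_image_cart: "measure lebesgue (f ` S) = \<bar>det (matrix f)\<bar> * measure lebesgue S"
proof -
  let ?P = "\<lambda>f :: real^'n \<Rightarrow> real^'n. \<forall>S \<in> lmeasurable.
    f ` S \<in> lmeasurable \<and> measure lebesgue (f ` S) = \<bar>det (matrix f)\<bar> * measure lebesgue S"
  have "?P f"
  proof (rule induct_linear_elementary[OF \<open>linear f\<close>])
    fix f g :: "real^'n \<Rightarrow> real^'n"
    assume "linear f" "linear g" "?P f" "?P g"
    show "?P (f \<circ> g)"
    proof
      fix S :: "(real^'n) set"
      assume "S \<in> lmeasurable"
      with \<open>?P g\<close> have "g ` S \<in> lmeasurable"
        and "measure lebesgue (g ` S) = \<bar>det (matrix g)\<bar> * measure lebesgue S"
        by auto
      with \<open>?P f\<close> show "(f \<circ> g) ` S \<in> lmeasurable \<and>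
          measure lebesgue ((f \<circ> g) ` S) = \<bar>det (matrix (f \<circ> g))\<bar> * measure lebesgue S"
        unfolding image_comp[symmetric] matrix_compose[OF \<open>linear g\<close> \<open>linear f\<close>]
        by (simp add: det_mul abs_mult)
    qed
  next
    fix f :: "real^'n \<Rightarrow> real^'n" and i
    assume f: "linear f" "\<And>x. f x $ i = 0"
    then have "\<not> surj f"
      by (metis (full_types) one_neq_zero surjE vec_component)
    then have "\<not> inj f" and "det (matrix f) = 0"
      using f(1) det_nz_iff_inj linear_injective_imp_surjective by blast+
    then show "?P f"
      using f(1) negligible_linear_singular_image negligible_imp_measure0
      by (auto intro: negligible_imp_measurable)
  next
    fix c :: "'n \<Rightarrow> real"
    show "?P (\<lambda>x. \<chi> i. c i * x $ i)"
      by (simp add: measurable_stretch measure_stretch det_matrix_stretch)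
  next
    fix m n :: 'n
    show "?P (\<lambda>x. \<chi> i. x $ Transposition.transpose m n i)"
      by (simp add: measure_swap_image abs_det_matrix_swap)
  next
    fix m n :: 'n
    assume "m \<noteq> n"
    then show "?P (\<lambda>x. \<chi> i. if i = m then x $ m + x $ n else x $ i)"
      using measure_shear_image[OF \<open>m \<noteq> n\<close>] det_matrix_shear[OF \<open>m \<noteq> n\<close>] by simp
  qed
  with assms show "f ` S \<in> lmeasurable" "measure lebesgue (f ` S) = \<bar>det (matrix f)\<bar> * measure lebesgue S"
    by blast+
qed

lemma det_rows_add_scaled:
  fixes w :: "'n::finite \<Rightarrow> 'a::comm_ring_1^'n" and v :: "'a^'n"
  shows "det (\<chi> r. if r \<in> R then w r + u r *s v else w r)
       = det (\<chi> r. w r) + (\<Sum>r\<in>R. u r * det (\<chi> r'. if r' = r then v else w r'))"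
  using finite[of R]
proof (induction R arbitrary: w rule: finite_induct)
  case (insert r0 R)
  let ?W = "\<lambda>r. if r \<in> R then w r + u r *s v else w r"
  have "(\<chi> r. if r \<in> insert r0 R then w r + u r *s v else w r)
      = (\<chi> r. if r = r0 then w r0 + u r0 *s v else ?W r)"
    using insert.hyps by (auto simp: vec_eq_iff)
  moreover have "(\<chi> r. if r = r0 then w r0 else ?W r) = (\<chi> r. ?W r)"
    using insert.hyps by (auto simp: vec_eq_iff)
  ultimately have split: "det (\<chi> r. if r \<in> insert r0 R then w r + u r *s v else w r)
      = det (\<chi> r. ?W r) + u r0 * det (\<chi> r. if r = r0 then v else ?W r)"
    by (simp add: det_row_add det_row_mul)
  \<comment> \<open>adding multiples of the row v to the other rows does not change the determinant\<close>
  have "det (\<chi> r. if r = r0 then v else ?W r) = det (\<chi> r. if r = r0 then v else w r)"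
  proof -
    let ?V = "\<lambda>r. if r = r0 then v else w r"
    have "(\<chi> r. if r = r0 then v else ?W r) = (\<chi> r. if r \<in> R then ?V r + u r *s v else ?V r)"
      using insert.hyps by (auto simp: vec_eq_iff)
    moreover have "det (\<chi> r'. if r' = r then v else ?V r') = 0" if "r \<in> R" for r
      using that insert.hyps by (intro det_identical_rows[of r r0]) (auto simp: row_def)
    ultimately show ?thesis
      using insert.IH[of ?V] by simp
  qed
  then show ?case
    using split insert.IH[of w] insert.hyps by (simp add: algebra_simps)
qed simp

lemma det_matrix_add_rank_one:
  fixes u v :: "real^'n::finite"
  shows "det (matrix (\<lambda>x. x + (v \<bullet> x) *\<^sub>R u)) = 1 + u \<bullet> v"
proof -
  have "matrix (\<lambda>x. x + (v \<bullet> x) *\<^sub>R u) = (\<chi> r. axis r 1 + u$r *s v)"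
    by (simp add: matrix_def vec_eq_iff inner_axis) (simp add: axis_def)
  moreover have "(\<chi> r. axis r 1) = (mat 1 :: real^'n^'n)"
    by (simp add: vec_eq_iff mat_def axis_def)
  moreover have "det (\<chi> r'. if r' = r then v else axis r' (1::real)) = v$r" for r
  proof -
    have rows: "row i (mat 1 :: real^'n^'n) = axis i 1" for i
      by (simp add: row_def mat_def axis_def vec_eq_iff)
    show ?thesis
      using cramer_lemma_transpose[of r v "mat 1", unfolded rows basis_expansion] by simp
  qed
  ultimately show ?thesis
    using det_rows_add_scaled[where R=UNIV and w="\<lambda>r. axis r 1" and u="\<lambda>r. u$r" and v=v]
    by (simp add: inner_vec_def)
qed

lemma
  fixes f :: "real^'n::finite \<Rightarrow> real^'n"
  assumes f: "linear f" "det (matrix f) \<noteq> 0" and S: "S \<in> lmeasurable"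
  shows measurable_affine_preimage_cart: "{x. f x + c \<in> S} \<in> lmeasurable"
    and measure_affine_preimage_cart:
      "measure lebesgue {x. f x + c \<in> S} = measure lebesgue S / \<bar>det (matrix f)\<bar>"
proof -
  have "inj f"
    using f det_nz_iff_inj by blast
  then have "surj f"
    using f(1) linear_injective_imp_surjective by blast
  define T where "T = (\<lambda>x. x - c) ` S"
  have T: "T \<in> lmeasurable" "measure lebesgue T = measure lebesgue S"
    unfolding T_def by (simp_all add: S measurable_translation_subtract measure_translation_subtract)
  have preimage: "{x. f x + c \<in> S} = inv f ` T"
  proof (intro set_eqI iffI)
    fix x
    assume "x \<in> {x. f x + c \<in> S}"
    then have "f x \<in> T"
      unfolding T_def by (force simp: image_iff)
    then show "x \<in> inv f ` T"
      using inv_f_f[OF \<open>inj f\<close>] by (metis image_eqI)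
  next
    fix x
    assume "x \<in> inv f ` T"
    then obtain y where "y \<in> S" "x = inv f (y - c)"
      unfolding T_def by auto
    then show "x \<in> {x. f x + c \<in> S}"
      using surj_f_inv_f[OF \<open>surj f\<close>] by simp
  qed
  have lin: "linear (inv f)"
    using f(1) \<open>inj f\<close> by (simp add: inj_linear_imp_inv_linear)
  show "{x. f x + c \<in> S} \<in> lmeasurable"
    unfolding preimage by (rule measurable_linear_image_cart[OF lin T(1)])
  have "measure lebesgue T = \<bar>det (matrix f)\<bar> * measure lebesgue (inv f ` T)"
    using measure_linear_image_cart[OF f(1), of "inv f ` T"] measurable_linear_image_cart[OF lin T(1)]
    by (simp add: image_image surj_f_inv_f[OF \<open>surj f\<close>])
  then show "measure lebesgue {x. f x + c \<in> S} = measure lebesgue S / \<bar>det (matrix f)\<bar>"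
    unfolding preimage using f(2) T(2) by (simp add: field_simps)
qed

lemma measure_std_simplex_cart:
  "{x::real^'n::finite. (\<forall>i. 0 \<le> x$i) \<and> sum (($) x) UNIV \<le> 1} \<in> lmeasurable"
  "measure lebesgue {x::real^'n::finite. (\<forall>i. 0 \<le> x$i) \<and> sum (($) x) UNIV \<le> 1} = 1 / fact CARD('n)"
proof -
  have "sum ((\<bullet>) x) Basis = sum (($) x) UNIV" for x :: "real^'n"
  proof -
    have B: "(Basis :: (real^'n) set) = range (\<lambda>i. axis i 1)"
      unfolding Basis_vec_def by auto
    show ?thesis
      unfolding B by (subst sum.reindex) (auto simp: inj_on_def axis_eq_axis inner_axis)
  qed
  then have hull: "{x::real^'n. (\<forall>i. 0 \<le> x$i) \<and> sum (($) x) UNIV \<le> 1} = convex hull (insert 0 Basis)"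
    unfolding std_simplex by (auto simp: Basis_vec_def inner_axis)
  have cpt: "compact (convex hull (insert 0 (Basis :: (real^'n) set)))"
    by (simp add: finite_imp_compact_convex_hull)
  then show "{x::real^'n. (\<forall>i. 0 \<le> x$i) \<and> sum (($) x) UNIV \<le> 1} \<in> lmeasurable"
    unfolding hull by (rule lmeasurable_compact)
  show "measure lebesgue {x::real^'n. (\<forall>i. 0 \<le> x$i) \<and> sum (($) x) UNIV \<le> 1} = 1 / fact CARD('n)"
    unfolding hull using content_std_simplex[where 'a="real^'n"] cpt
    by (simp add: borel_compact)
qed

lemma
  fixes c :: "'n::finite \<Rightarrow> real"
  assumes c: "\<And>i. 0 < c i"
  shows measurable_weighted_simplex: "{x::real^'n. (\<forall>i. 0 \<le> x$i) \<and> (\<Sum>i\<in>UNIV. c i * x$i) \<le> 1} \<in> lmeasurable"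
    and measure_weighted_simplex:
      "measure lebesgue {x::real^'n. (\<forall>i. 0 \<le> x$i) \<and> (\<Sum>i\<in>UNIV. c i * x$i) \<le> 1}
         = 1 / (prod c UNIV * fact CARD('n))"
proof -
  let ?f = "\<lambda>x::real^'n. \<chi> i. c i * x$i"
  have lin: "linear ?f"
    by (rule linearI) (simp_all add: vec_eq_iff algebra_simps)
  have det: "det (matrix ?f) = prod c UNIV" "prod c UNIV > 0"
    using c by (simp_all add: det_matrix_stretch prod_pos)
  have det_ne: "det (matrix ?f) \<noteq> 0"
    using c by (simp add: det(1)) (metis less_irrefl)
  have eq: "{x::real^'n. (\<forall>i. 0 \<le> x$i) \<and> (\<Sum>i\<in>UNIV. c i * x$i) \<le> 1}
      = {x. ?f x + 0 \<in> {x. (\<forall>i. 0 \<le> x$i) \<and> sum (($) x) UNIV \<le> 1}}"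
  proof -
    have "0 \<le> c i * t \<longleftrightarrow> 0 \<le> t" for i t
      using c[of i] by (simp add: zero_le_mult_iff)
    then show ?thesis
      by simp
  qed
  show "{x::real^'n. (\<forall>i. 0 \<le> x$i) \<and> (\<Sum>i\<in>UNIV. c i * x$i) \<le> 1} \<in> lmeasurable"
    unfolding eq by (rule measurable_affine_preimage_cart[OF lin det_ne measure_std_simplex_cart(1)])
  show "measure lebesgue {x::real^'n. (\<forall>i. 0 \<le> x$i) \<and> (\<Sum>i\<in>UNIV. c i * x$i) \<le> 1}
      = 1 / (prod c UNIV * fact CARD('n))"
    unfolding eq measure_affine_preimage_cart[OF lin det_ne measure_std_simplex_cart(1)]
      measure_std_simplex_cart(2) det(1) using det(2) by simp
qed

section \<open>The iterated pyramid over the square\<close>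

lemma sum_UNIV_pair:
  fixes f :: "'n::finite \<Rightarrow> 'a::comm_monoid_add"
  assumes "i \<noteq> j"
  shows "sum f UNIV = f i + f j + sum f (- {i, j})"
proof -
  have "UNIV = insert i (insert j (- {i, j}))"
    by auto
  then have "sum f UNIV = sum f (insert i (insert j (- {i, j})))"
    by (simp only:)
  then show ?thesis
    using assms by (simp add: add.assoc)
qed

lemma prod_UNIV_pair:
  fixes f :: "'n::finite \<Rightarrow> 'a::comm_monoid_mult"
  assumes "i \<noteq> j"
  shows "prod f UNIV = f i * f j * prod f (- {i, j})"
proof -
  have "UNIV = insert i (insert j (- {i, j}))"
    by auto
  then have "prod f UNIV = prod f (insert i (insert j (- {i, j})))"
    by (simp only:)
  then show ?thesis
    using assms by (simp add: mult.assoc)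
qed

lemma card_Compl_pair:
  fixes i j :: "'n::finite"
  assumes "i \<noteq> j"
  shows "card (- {i, j}) = CARD('n) - 2" and "2 \<le> CARD('n)"
proof -
  have "card {i, j} \<le> CARD('n)"
    by (rule card_mono) auto
  then show "2 \<le> CARD('n)"
    using assms by simp
  show "card (- {i, j}) = CARD('n) - 2"
    using assms by (simp add: Compl_eq_Diff_UNIV card_Diff_subset)
qed

definition sq_pyramid_ineqs :: "'n::finite \<Rightarrow> 'n \<Rightarrow> (real^'n) set" where
  "sq_pyramid_ineqs i j = {x. (\<forall>l. 0 \<le> x$l) \<and> x$i + (\<Sum>k\<in>-{i,j}. x$k) \<le> 1 \<and> x$j + (\<Sum>k\<in>-{i,j}. x$k) \<le> 1}"

lemma convex_sq_pyramid_ineqs: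
  fixes i j :: "'n::finite"
  shows "convex (sq_pyramid_ineqs i j)"
  unfolding convex_def
proof (intro ballI allI impI)
  fix x y :: "real^'n" and u v :: real
  assume x: "x \<in> sq_pyramid_ineqs i j" and y: "y \<in> sq_pyramid_ineqs i j" and uv: "0 \<le> u" "0 \<le> v" "u + v = 1"
  let ?S = "\<lambda>x::real^'n. \<Sum>k\<in>-{i,j}. x$k"
  have bound: "(u *\<^sub>R x + v *\<^sub>R y)$l + ?S (u *\<^sub>R x + v *\<^sub>R y) \<le> 1"
    if "x$l + ?S x \<le> 1" "y$l + ?S y \<le> 1" for l
  proof -
    have "(u *\<^sub>R x + v *\<^sub>R y)$l + ?S (u *\<^sub>R x + v *\<^sub>R y) = u * (x$l + ?S x) + v * (y$l + ?S y)"
      by (simp add: sum.distrib sum_distrib_left algebra_simps)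
    also have "\<dots> \<le> u * 1 + v * 1"
      using that uv by (intro add_mono mult_left_mono) auto
    finally show ?thesis
      using uv by simp
  qed
  have "0 \<le> (u *\<^sub>R x + v *\<^sub>R y)$l" for l
    using x y uv by (simp add: sq_pyramid_ineqs_def)
  moreover have "x$l + ?S x \<le> 1" "y$l + ?S y \<le> 1" if "l = i \<or> l = j" for l
    using x y that by (auto simp: sq_pyramid_ineqs_def)
  ultimately show "u *\<^sub>R x + v *\<^sub>R y \<in> sq_pyramid_ineqs i j"
    unfolding sq_pyramid_ineqs_def mem_Collect_eq by (blast intro: bound)
qed

lemma sq_pyramid_subset_ineqs:
  fixes i j :: "'n::finite"
  shows "sq_pyramid i j \<subseteq> sq_pyramid_ineqs i j"
proof -
  let ?Q = "{x::real^'n. 0 \<le> x$i \<and> x$i \<le> 1 \<and> 0 \<le> x$j \<and> x$j \<le> 1 \<and> (\<forall>k. k \<noteq> i \<and> k \<noteq> j \<longrightarrow> x$k = 0)}"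
  let ?A = "{axis k 1 | k. k \<noteq> i \<and> k \<noteq> j}"
  have "?Q \<union> ?A \<subseteq> sq_pyramid_ineqs i j"
  proof -
    have "(\<Sum>k\<in>-{i,j}. x$k) = 0" if "x \<in> ?Q" for x
      using that by (intro sum.neutral) auto
    moreover have "(\<Sum>l\<in>-{i,j}. axis k 1 $ l) = (1::real)" if "k \<noteq> i" "k \<noteq> j" for k
      using that by (simp add: axis_def)
    ultimately show ?thesis
      by (force simp: sq_pyramid_ineqs_def axis_def)
  qed
  then show ?thesis
    unfolding sq_pyramid_def by (rule hull_minimal) (rule convex_sq_pyramid_ineqs)
qed

lemma sq_pyramid_ineqs_subset:
  fixes i j :: "'n::finite"
  assumes "i \<noteq> j"
  shows "sq_pyramid_ineqs i j \<subseteq> sq_pyramid i j"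
proof
  let ?Q = "{x::real^'n. 0 \<le> x$i \<and> x$i \<le> 1 \<and> 0 \<le> x$j \<and> x$j \<le> 1 \<and> (\<forall>k. k \<noteq> i \<and> k \<noteq> j \<longrightarrow> x$k = 0)}"
  let ?A = "{axis k 1 | k. k \<noteq> i \<and> k \<noteq> j}"
  fix x :: "real^'n"
  assume x: "x \<in> sq_pyramid_ineqs i j"
  define \<mu> where "\<mu> = 1 - (\<Sum>k\<in>-{i,j}. x$k)"
  \<comment> \<open>x is the convex combination of a point q of the square with weight \<mu> and the apexes with weights x$k\<close>
  define q :: "real^'n" where "q = (\<chi> l. if l = i \<or> l = j then x$l / \<mu> else 0)"
  define w where "w = (\<lambda>l. if l = i then \<mu> else if l = j then 0 else x$l)"
  define p where "p = (\<lambda>l. if l = i \<or> l = j then q else axis l 1)"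
  have x_nonneg: "0 \<le> x$l" for l
    using x by (simp add: sq_pyramid_ineqs_def)
  have "x$i + (\<Sum>k\<in>-{i,j}. x$k) \<le> 1" "x$j + (\<Sum>k\<in>-{i,j}. x$k) \<le> 1"
    using x by (auto simp: sq_pyramid_ineqs_def)
  then have x_bounds: "0 \<le> x$i" "0 \<le> x$j" "x$i \<le> \<mu>" "x$j \<le> \<mu>" "0 \<le> \<mu>"
    using x_nonneg[of i] x_nonneg[of j] unfolding \<mu>_def by linarith+
  have w_pair: "w i = \<mu>" "w j = 0" and p_pair: "p i = q" "p j = q"
    using \<open>i \<noteq> j\<close> by (simp_all add: w_def p_def)
  have apex_w: "(\<Sum>l\<in>-{i,j}. w l) = (\<Sum>l\<in>-{i,j}. x$l)"
    and apex_wp: "(\<Sum>l\<in>-{i,j}. w l *\<^sub>R p l) = (\<Sum>l\<in>-{i,j}. x$l *\<^sub>R axis l 1)"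
    by (auto simp: w_def p_def intro!: sum.cong)
  have "(\<Sum>l\<in>UNIV. w l *\<^sub>R p l) \<in> sq_pyramid i j"
    unfolding sq_pyramid_def
  proof (rule convex_sum[OF finite convex_convex_hull])
    show "sum w UNIV = 1"
      using \<open>i \<noteq> j\<close> apex_w by (simp add: sum_UNIV_pair w_pair \<mu>_def)
    show "\<And>l. l \<in> UNIV \<Longrightarrow> 0 \<le> w l"
      using x_nonneg x_bounds by (auto simp: w_def)
    show "\<And>l. l \<in> UNIV \<Longrightarrow> p l \<in> convex hull (?Q \<union> ?A)"
      using x_bounds by (intro hull_inc) (auto simp: p_def q_def divide_le_eq)
  qed
  moreover have "(\<Sum>l\<in>UNIV. w l *\<^sub>R p l) = x"
  proof -
    have "(\<Sum>l\<in>UNIV. w l *\<^sub>R p l) = \<mu> *\<^sub>R q + (\<Sum>l\<in>-{i,j}. x$l *\<^sub>R axis l 1)"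
      using \<open>i \<noteq> j\<close> apex_wp by (simp add: sum_UNIV_pair w_pair p_pair)
    also have "\<dots> = x"
      using x_bounds
      by (auto simp: vec_eq_iff q_def axis_def if_distrib[of "\<lambda>t. _ * t"] cong: if_cong)
    finally show ?thesis .
  qed
  ultimately show "x \<in> sq_pyramid i j"
    by simp
qed

lemma sq_pyramid_eq:
  fixes i j :: "'n::finite"
  assumes "i \<noteq> j"
  shows "sq_pyramid i j = {x. (\<forall>l. 0 \<le> x$l) \<and> x$i + (\<Sum>k\<in>-{i,j}. x$k) \<le> 1 \<and> x$j + (\<Sum>k\<in>-{i,j}. x$k) \<le> 1}"
  using sq_pyramid_subset_ineqs sq_pyramid_ineqs_subset[OF assms] unfolding sq_pyramid_ineqs_def
  by (rule equalityI)

lemma sq_pyramid_commute: "sq_pyramid i j = sq_pyramid j i"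
  by (cases "i = j") (auto simp: sq_pyramid_eq insert_commute)

lemma sq_pyramid_half:
  fixes i j :: "'n::finite"
  assumes ij: "i \<noteq> j"
  shows "{x \<in> sq_pyramid i j. x$j \<le> x$i} \<in> lmeasurable"
    and "measure lebesgue {x \<in> sq_pyramid i j. x$j \<le> x$i} = 1 / fact CARD('n)"
proof -
  \<comment> \<open>the shear replacing x$i by x$i - x$j maps this half onto the standard simplex\<close>
  define f where "f x = x + ((- axis j 1) \<bullet> x) *\<^sub>R axis i 1" for x :: "real^'n"
  have lin: "linear f"
    unfolding f_def by (rule linearI) (simp_all add: algebra_simps)
  have det: "det (matrix f) = 1"
    unfolding f_def det_matrix_add_rank_one using ij by (simp add: inner_axis_axis)
  have f_i: "(f x)$i = x$i - x$j" for x
    by (simp add: f_def inner_axis')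
  have f_other: "(f x)$l = x$l" if "l \<noteq> i" for x l
  proof -
    have "axis i (1::real) $ l = 0"
      using that by (simp add: axis_def)
    then show ?thesis
      by (simp add: f_def)
  qed
  have "x \<in> sq_pyramid i j \<and> x$j \<le> x$i \<longleftrightarrow> (\<forall>l. 0 \<le> (f x + 0)$l) \<and> sum (($) (f x + 0)) UNIV \<le> 1" for x
  proof -
    have "sum (($) (f x)) UNIV = x$i + (\<Sum>k\<in>-{i,j}. x$k)"
      unfolding sum_UNIV_pair[OF ij] using ij by (simp add: f_i f_other)
    moreover have "(\<forall>l. 0 \<le> (f x)$l) \<longleftrightarrow> x$j \<le> x$i \<and> (\<forall>l. 0 \<le> x$l)"
    proof (intro iffI conjI allI)
      assume nonneg: "\<forall>l. 0 \<le> (f x)$l"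
      then show "x$j \<le> x$i"
        using f_i[of x] by (metis diff_ge_0_iff_ge)
      fix l
      show "0 \<le> x$l"
      proof (cases "l = i")
        case True
        have "0 \<le> x$j"
          using nonneg f_other[OF ij[symmetric]] by metis
        with \<open>x$j \<le> x$i\<close> True show ?thesis
          by simp
      qed (use nonneg f_other in metis)
    next
      fix l
      assume "x$j \<le> x$i \<and> (\<forall>l. 0 \<le> x$l)"
      then show "0 \<le> (f x)$l"
        by (cases "l = i") (simp_all add: f_i f_other)
    qed
    ultimately show ?thesis
      unfolding sq_pyramid_eq[OF ij] by auto
  qed
  then have eq: "{x \<in> sq_pyramid i j. x$j \<le> x$i}
      = {x. f x + 0 \<in> {x. (\<forall>i. 0 \<le> x$i) \<and> sum (($) x) UNIV \<le> 1}}"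
    by auto
  show "{x \<in> sq_pyramid i j. x$j \<le> x$i} \<in> lmeasurable"
    unfolding eq using lin det measure_std_simplex_cart(1) by (intro measurable_affine_preimage_cart) auto
  show "measure lebesgue {x \<in> sq_pyramid i j. x$j \<le> x$i} = 1 / fact CARD('n)"
    unfolding eq using lin det measure_std_simplex_cart by (subst measure_affine_preimage_cart) auto
qed

lemma measure_sq_pyramid:
  fixes i j :: "'n::finite"
  assumes "i \<noteq> j"
  shows "measure lebesgue (sq_pyramid i j) = 2 / fact CARD('n)"
proof -
  let ?H1 = "{x \<in> sq_pyramid i j. x$j \<le> x$i}" and ?H2 = "{x \<in> sq_pyramid j i. x$i \<le> x$j}"
  have "negligible {x::real^'n. (axis i 1 - axis j 1) \<bullet> x = 0}"
    using assms by (intro negligible_hyperplane) (simp add: axis_eq_axis)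
  moreover have "?H1 \<inter> ?H2 \<subseteq> {x. (axis i 1 - axis j 1) \<bullet> x = 0}"
    by (auto simp: inner_diff_left inner_axis')
  ultimately have neg: "negligible (?H1 \<inter> ?H2)"
    by (rule negligible_subset)
  have union: "?H1 \<union> ?H2 \<union> {} = sq_pyramid i j"
    unfolding sq_pyramid_commute[of j i] by auto
  have "measure lebesgue (sq_pyramid i j) = measure lebesgue ?H1 + measure lebesgue ?H2 + measure lebesgue {}"
    using measure_Un3_negligible[OF sq_pyramid_half(1)[OF assms] sq_pyramid_half(1)[OF assms[symmetric]]
        _ neg _ _ union]
    by simp
  then show ?thesis
    using sq_pyramid_half(2)[OF assms] sq_pyramid_half(2)[OF assms[symmetric]] by simp
qed

lemma interior_sq_pyramid:
  fixes i j :: "'n::finite"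
  assumes "i \<noteq> j"
  shows "interior (sq_pyramid i j)
    = {x. (\<forall>l. 0 < x$l) \<and> x$i + (\<Sum>k\<in>-{i,j}. x$k) < 1 \<and> x$j + (\<Sum>k\<in>-{i,j}. x$k) < 1}"
    (is "_ = ?I")
proof
  have "?I \<subseteq> sq_pyramid i j"
    using assms by (auto simp: sq_pyramid_eq less_imp_le)
  moreover have "open ?I"
  proof -
    have "{x::real^'n. \<forall>l. 0 < x$l} = (\<Inter>l. {x. 0 < x$l})"
      by auto
    then have "open {x::real^'n. \<forall>l. 0 < x$l}"
      by (simp add: open_INT open_halfspace_component_gt_cart)
    then show ?thesis
      by (intro open_Collect_conj open_Collect_less continuous_intros)
  qed
  ultimately show "?I \<subseteq> interior (sq_pyramid i j)"
    by (rule interior_maximal)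
next
  show "interior (sq_pyramid i j) \<subseteq> ?I"
  proof
    fix x
    assume "x \<in> interior (sq_pyramid i j)"
    then obtain e where "0 < e" and e: "ball x e \<subseteq> sq_pyramid i j"
      by (auto simp: mem_interior)
    have shift: "x + t *\<^sub>R axis l 1 \<in> sq_pyramid i j" if "\<bar>t\<bar> < e" for t l
      using e that by (auto simp: dist_norm)
    have "0 < x$l" for l
    proof -
      have "x + (- e/2) *\<^sub>R axis l 1 \<in> sq_pyramid i j"
        using \<open>0 < e\<close> by (intro shift) simp
      then have "0 \<le> (x + (- e/2) *\<^sub>R axis l 1) $ l"
        unfolding sq_pyramid_eq[OF assms] by blast
      then show ?thesis
        using \<open>0 < e\<close> by simp
    qed
    moreover have "x$l + (\<Sum>k\<in>-{i,j}. x$k) < 1" if "l = i \<or> l = j" for l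
    proof -
      have "(\<Sum>k\<in>-{i,j}. (x + (e/2) *\<^sub>R axis l 1)$k) = (\<Sum>k\<in>-{i,j}. x$k)"
        using that by (intro sum.cong) (auto simp: axis_def)
      then show ?thesis
        using shift[of "e/2" l] \<open>0 < e\<close> assms that by (auto simp: sq_pyramid_eq)
    qed
    ultimately show "x \<in> ?I"
      by auto
  qed
qed

lemma polar_sq_pyramid:
  fixes i j :: "'n::finite" and z :: "real^'n"
  assumes "i \<noteq> j"
  shows "polar ((\<lambda>x. x - z) ` sq_pyramid i j)
    = {y. max 0 (y$i) + max 0 (y$j) \<le> 1 + z \<bullet> y \<and> (\<forall>k\<in>-{i,j}. y$k \<le> 1 + z \<bullet> y)}"
proof -
  have inner_split: "x \<bullet> y = x$i * y$i + x$j * y$j + (\<Sum>k\<in>-{i,j}. x$k * y$k)" for x y :: "real^'n"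
    by (simp add: inner_vec_def sum_UNIV_pair[OF assms])
  have "y \<in> polar ((\<lambda>x. x - z) ` sq_pyramid i j) \<longleftrightarrow> (\<forall>x\<in>sq_pyramid i j. x \<bullet> y \<le> 1 + z \<bullet> y)" for y
    by (auto simp: polar_def algebra_simps)
  moreover have "(\<forall>x\<in>sq_pyramid i j. x \<bullet> y \<le> 1 + z \<bullet> y)
      \<longleftrightarrow> max 0 (y$i) + max 0 (y$j) \<le> 1 + z \<bullet> y \<and> (\<forall>k\<in>-{i,j}. y$k \<le> 1 + z \<bullet> y)" for y
  proof
    assume all: "\<forall>x\<in>sq_pyramid i j. x \<bullet> y \<le> 1 + z \<bullet> y"
    \<comment> \<open>test against the best vertex of the square and against the apexes\<close>
    define v :: "real^'n" where "v = (\<chi> l. if l = i then of_bool (0 \<le> y$i) else if l = j then of_bool (0 \<le> y$j) else 0)"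
    have "v \<in> sq_pyramid i j"
      using assms by (auto simp: sq_pyramid_eq v_def)
    moreover have "v \<bullet> y = max 0 (y$i) + max 0 (y$j)"
      using assms by (simp add: inner_split v_def)
    moreover have "axis k 1 \<in> sq_pyramid i j" if "k \<in> -{i,j}" for k
      using that assms by (auto simp: sq_pyramid_eq axis_def)
    moreover have "axis k 1 \<bullet> y = y$k" for k
      by (simp add: inner_axis')
    ultimately show "max 0 (y$i) + max 0 (y$j) \<le> 1 + z \<bullet> y \<and> (\<forall>k\<in>-{i,j}. y$k \<le> 1 + z \<bullet> y)"
      using all by metis
  next
    assume "max 0 (y$i) + max 0 (y$j) \<le> 1 + z \<bullet> y \<and> (\<forall>k\<in>-{i,j}. y$k \<le> 1 + z \<bullet> y)"
    then have square: "max 0 (y$i) + max 0 (y$j) \<le> 1 + z \<bullet> y"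
      and apex: "\<And>k. k \<in> -{i,j} \<Longrightarrow> y$k \<le> 1 + z \<bullet> y"
      by auto
    show "\<forall>x\<in>sq_pyramid i j. x \<bullet> y \<le> 1 + z \<bullet> y"
    proof
      fix x
      assume "x \<in> sq_pyramid i j"
      define S where "S = (\<Sum>k\<in>-{i,j}. x$k)"
      have x: "\<And>l. 0 \<le> x$l" "x$i \<le> 1 - S" "x$j \<le> 1 - S"
        using \<open>x \<in> sq_pyramid i j\<close> assms by (auto simp: sq_pyramid_eq S_def)
      have "x$i * y$i + x$j * y$j \<le> (1 - S) * (max 0 (y$i) + max 0 (y$j))"
        using x by (smt (verit) mult_left_mono mult_right_mono distrib_left)
      also have "\<dots> \<le> (1 - S) * (1 + z \<bullet> y)"
        using x(1)[of i] x(2) square by (intro mult_left_mono) auto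
      finally have "x$i * y$i + x$j * y$j \<le> (1 - S) * (1 + z \<bullet> y)" .
      moreover have "(\<Sum>k\<in>-{i,j}. x$k * y$k) \<le> S * (1 + z \<bullet> y)"
        unfolding S_def sum_distrib_right using x(1) apex by (intro sum_mono mult_left_mono) auto
      ultimately show "x \<bullet> y \<le> 1 + z \<bullet> y"
        unfolding inner_split[of x y] by (simp add: algebra_simps)
    qed
  qed
  ultimately show ?thesis
    by auto
qed

section \<open>The volume of the polar bodies\<close>

text \<open>
  On the quadrant of the polar of P - z where y_i and y_j have prescribed signs, the affine map
  y \<mapsto> quadrant_map y + apex_indicator takes the coordinates i and j to \<bar>y_i\<bar> and \<bar>y_j\<bar> and
  every apex coordinate k to the slack 1 + z \<bullet> y - y_k of the inequality coming from the apex e_k.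
  The remaining inequality, from the best vertex of the square, becomes a weighted sum of these
  coordinates, so the quadrant is mapped onto a weighted standard simplex.
\<close>

definition apex_indicator :: "'n::finite \<Rightarrow> 'n \<Rightarrow> real^'n" where
  "apex_indicator i j = (\<chi> l. of_bool (l \<in> -{i,j}))"

definition quadrant_map :: "'n::finite \<Rightarrow> 'n \<Rightarrow> real^'n \<Rightarrow> bool \<Rightarrow> bool \<Rightarrow> real^'n \<Rightarrow> real^'n" where
  "quadrant_map i j z \<sigma>\<^sub>1 \<sigma>\<^sub>2 y = (\<chi> l. if l = i then (if \<sigma>\<^sub>1 then y$i else - y$i)
                                    else if l = j then (if \<sigma>\<^sub>2 then y$j else - y$j)
                                    else z \<bullet> y - y$l)"

definition quadrant_weight :: "'n::finite \<Rightarrow> 'n \<Rightarrow> real^'n \<Rightarrow> bool \<Rightarrow> bool \<Rightarrow> 'n \<Rightarrow> real" where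
  "quadrant_weight i j z \<sigma>\<^sub>1 \<sigma>\<^sub>2 l =
    (if l = i then (if \<sigma>\<^sub>1 then 1 - (\<Sum>k\<in>-{i,j}. z$k) - z$i else z$i)
     else if l = j then (if \<sigma>\<^sub>2 then 1 - (\<Sum>k\<in>-{i,j}. z$k) - z$j else z$j)
     else z$l)"

lemma linear_quadrant_map: "linear (quadrant_map i j z \<sigma>\<^sub>1 \<sigma>\<^sub>2)"
  unfolding quadrant_map_def by (rule linearI) (simp_all add: vec_eq_iff algebra_simps)

lemma abs_det_quadrant_map:
  fixes i j :: "'n::finite"
  assumes ij: "i \<noteq> j"
  shows "\<bar>det (matrix (quadrant_map i j z \<sigma>\<^sub>1 \<sigma>\<^sub>2))\<bar> = \<bar>1 - (\<Sum>k\<in>-{i,j}. z$k)\<bar>"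
proof -
  define d where "d l = (if l = i then (if \<sigma>\<^sub>1 then 1 else -1) else if l = j then (if \<sigma>\<^sub>2 then 1 else -1) else - 1 :: real)" for l
  let ?D = "\<lambda>q::real^'n. \<chi> l. d l * q$l" and ?E = "\<lambda>y. y + ((- z) \<bullet> y) *\<^sub>R apex_indicator i j"
  have "quadrant_map i j z \<sigma>\<^sub>1 \<sigma>\<^sub>2 = ?D \<circ> ?E"
    using ij by (auto simp: fun_eq_iff vec_eq_iff quadrant_map_def d_def apex_indicator_def)
  moreover have lin_D: "linear ?D" and lin_E: "linear ?E"
    by (intro linearI; simp add: vec_eq_iff algebra_simps)+
  moreover have "apex_indicator i j \<bullet> z = (\<Sum>k\<in>-{i,j}. z$k)"
    unfolding inner_vec_def sum_UNIV_pair[OF ij] using ij by (auto simp: apex_indicator_def intro!: sum.cong)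
  then have "det (matrix ?E) = 1 - (\<Sum>k\<in>-{i,j}. z$k)"
    unfolding det_matrix_add_rank_one by simp
  moreover have "\<bar>prod d UNIV\<bar> = 1"
    unfolding abs_prod by (intro prod.neutral) (simp add: d_def)
  ultimately show ?thesis
    by (simp add: matrix_compose det_mul det_matrix_stretch abs_mult)
qed

lemma polar_quadrant_eq:
  fixes i j :: "'n::finite" and z :: "real^'n"
  assumes ij: "i \<noteq> j" and s_pos: "0 < 1 - (\<Sum>k\<in>-{i,j}. z$k)"
  shows "{y \<in> polar ((\<lambda>x. x - z) ` sq_pyramid i j).
            0 \<le> (if \<sigma>\<^sub>1 then y$i else - y$i) \<and> 0 \<le> (if \<sigma>\<^sub>2 then y$j else - y$j)}
       = {y. quadrant_map i j z \<sigma>\<^sub>1 \<sigma>\<^sub>2 y + apex_indicator i j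
               \<in> {p. (\<forall>l. 0 \<le> p$l) \<and> (\<Sum>l\<in>UNIV. quadrant_weight i j z \<sigma>\<^sub>1 \<sigma>\<^sub>2 l * p$l) \<le> 1}}"
proof -
  define s where "s = 1 - (\<Sum>k\<in>-{i,j}. z$k)"
  have "y \<in> polar ((\<lambda>x. x - z) ` sq_pyramid i j) \<and>
            0 \<le> (if \<sigma>\<^sub>1 then y$i else - y$i) \<and> 0 \<le> (if \<sigma>\<^sub>2 then y$j else - y$j)
        \<longleftrightarrow> (\<forall>l. 0 \<le> p y $ l) \<and> (\<Sum>l\<in>UNIV. quadrant_weight i j z \<sigma>\<^sub>1 \<sigma>\<^sub>2 l * p y $ l) \<le> 1"
    if "p = (\<lambda>y. quadrant_map i j z \<sigma>\<^sub>1 \<sigma>\<^sub>2 y + apex_indicator i j)" for p y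
  proof -
    define w where "w = z \<bullet> y"
    define m where "m = (if \<sigma>\<^sub>1 then y$i else 0) + (if \<sigma>\<^sub>2 then y$j else 0)"
    have p_i: "p y $ i = (if \<sigma>\<^sub>1 then y$i else - y$i)" and p_j: "p y $ j = (if \<sigma>\<^sub>2 then y$j else - y$j)"
      using ij by (simp_all add: that quadrant_map_def apex_indicator_def)
    have p_apex: "p y $ k = 1 + w - y$k" if "k \<in> -{i,j}" for k
      using that by (simp add: \<open>p = _\<close> quadrant_map_def apex_indicator_def w_def)
    have "(\<forall>l. 0 \<le> p y $ l) \<longleftrightarrow> 0 \<le> p y $ i \<and> 0 \<le> p y $ j \<and> (\<forall>k\<in>-{i,j}. y$k \<le> 1 + w)"
      using p_apex by (metis ComplI diff_ge_0_iff_ge insertE singletonD)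
    moreover have "(\<Sum>l\<in>UNIV. quadrant_weight i j z \<sigma>\<^sub>1 \<sigma>\<^sub>2 l * p y $ l) = s * (m - w) + (1 - s)"
    proof -
      have "(\<Sum>k\<in>-{i,j}. quadrant_weight i j z \<sigma>\<^sub>1 \<sigma>\<^sub>2 k * p y $ k) = (\<Sum>k\<in>-{i,j}. z$k * (1 + w - y$k))"
      proof (rule sum.cong[OF refl])
        fix k
        assume "k \<in> -{i,j}"
        then show "quadrant_weight i j z \<sigma>\<^sub>1 \<sigma>\<^sub>2 k * p y $ k = z$k * (1 + w - y$k)"
          using p_apex[OF \<open>k \<in> -{i,j}\<close>] by (auto simp: quadrant_weight_def)
      qed
      also have "\<dots> = (1 - s) * (1 + w) - (\<Sum>k\<in>-{i,j}. z$k * y$k)"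
        by (simp add: s_def algebra_simps sum_subtractf sum.distrib sum_distrib_left sum_distrib_right)
      finally have apex_sum: "(\<Sum>k\<in>-{i,j}. quadrant_weight i j z \<sigma>\<^sub>1 \<sigma>\<^sub>2 k * p y $ k)
          = (1 - s) * (1 + w) - (\<Sum>k\<in>-{i,j}. z$k * y$k)" .
      have "w = z$i * y$i + z$j * y$j + (\<Sum>k\<in>-{i,j}. z$k * y$k)"
        unfolding w_def inner_vec_def sum_UNIV_pair[OF ij] by simp
      then show ?thesis
        unfolding sum_UNIV_pair[OF ij] apex_sum p_i p_j using ij
        by (simp add: quadrant_weight_def s_def[symmetric] m_def algebra_simps)
    qed
    moreover have "0 \<le> p y $ i \<Longrightarrow> 0 \<le> p y $ j \<Longrightarrow> max 0 (y$i) + max 0 (y$j) = m"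
      unfolding p_i p_j m_def by auto
    moreover have "s * (m - w) + (1 - s) \<le> 1 \<longleftrightarrow> m \<le> 1 + w"
      using s_pos mult_le_cancel_left_pos[of s "m - w" 1] unfolding s_def[symmetric] by auto
    ultimately show ?thesis
      unfolding polar_sq_pyramid[OF ij] p_i p_j w_def by auto
  qed
  then show ?thesis
    by auto
qed

lemma measure_polar_quadrant:
  fixes i j :: "'n::finite" and z :: "real^'n" and \<sigma>\<^sub>1 \<sigma>\<^sub>2 :: bool
  assumes ij: "i \<noteq> j" and z: "z \<in> interior (sq_pyramid i j)"
  defines "s \<equiv> 1 - (\<Sum>k\<in>-{i,j}. z$k)"
    and "Q \<equiv> {y \<in> polar ((\<lambda>x. x - z) ` sq_pyramid i j).
                0 \<le> (if \<sigma>\<^sub>1 then y$i else - y$i) \<and> 0 \<le> (if \<sigma>\<^sub>2 then y$j else - y$j)}"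
  shows "Q \<in> lmeasurable"
    and "measure lebesgue Q = 1 / (if \<sigma>\<^sub>1 then s - z$i else z$i) * (1 / (if \<sigma>\<^sub>2 then s - z$j else z$j))
                                / (s * (\<Prod>k\<in>-{i,j}. z$k) * fact CARD('n))"
proof -
  let ?f = "quadrant_map i j z \<sigma>\<^sub>1 \<sigma>\<^sub>2" and ?c = "quadrant_weight i j z \<sigma>\<^sub>1 \<sigma>\<^sub>2"
  have z_pos: "\<And>l. 0 < z$l" and z_i: "z$i < s" and z_j: "z$j < s"
    using z unfolding interior_sq_pyramid[OF ij] s_def by auto
  then have s_pos: "0 < s"
    by (meson less_trans)
  have det: "\<bar>det (matrix ?f)\<bar> = s" and det_ne: "det (matrix ?f) \<noteq> 0"
    using abs_det_quadrant_map[OF ij, of z \<sigma>\<^sub>1 \<sigma>\<^sub>2] s_pos by (auto simp: s_def)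
  have c_pos: "\<And>l. 0 < ?c l"
    using ij z_pos z_i z_j by (simp add: quadrant_weight_def s_def)
  have prod_c: "prod ?c UNIV = (if \<sigma>\<^sub>1 then s - z$i else z$i) * (if \<sigma>\<^sub>2 then s - z$j else z$j) * (\<Prod>k\<in>-{i,j}. z$k)"
    unfolding prod_UNIV_pair[OF ij] using ij by (auto simp: quadrant_weight_def s_def intro!: prod.cong)
  note Q_eq = polar_quadrant_eq[OF ij s_pos[unfolded s_def], of \<sigma>\<^sub>1 \<sigma>\<^sub>2, folded Q_def]
  note preimage = measurable_affine_preimage_cart measure_affine_preimage_cart
  show "Q \<in> lmeasurable"
    unfolding Q_eq by (rule preimage(1)[OF linear_quadrant_map det_ne measurable_weighted_simplex[OF c_pos]])
  show "measure lebesgue Q = 1 / (if \<sigma>\<^sub>1 then s - z$i else z$i) * (1 / (if \<sigma>\<^sub>2 then s - z$j else z$j))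
                                / (s * (\<Prod>k\<in>-{i,j}. z$k) * fact CARD('n))"
    unfolding Q_eq preimage(2)[OF linear_quadrant_map det_ne measurable_weighted_simplex[OF c_pos]]
      measure_weighted_simplex[OF c_pos] det prod_c
    by (simp add: ac_simps)
qed

lemma
  fixes K :: "(real^'n::finite) set" and i j :: 'n
  defines "F \<equiv> \<lambda>\<sigma>. {y \<in> K. 0 \<le> (if fst \<sigma> then y$i else - y$i) \<and> 0 \<le> (if snd \<sigma> then y$j else - y$j)}"
  shows Union_sign_quadrants: "(\<Union>\<sigma>. F \<sigma>) = K"
    and negligible_sign_quadrants_Int: "\<sigma> \<noteq> \<tau> \<Longrightarrow> negligible (F \<sigma> \<inter> F \<tau>)"
proof -
  show "(\<Union>\<sigma>. F \<sigma>) = K"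
  proof (intro equalityI subsetI)
    fix y
    assume "y \<in> (\<Union>\<sigma>. F \<sigma>)"
    then obtain \<sigma> where "y \<in> F \<sigma>"
      by blast
    then show "y \<in> K"
      unfolding F_def mem_Collect_eq by (rule conjunct1)
  next
    fix y
    assume "y \<in> K"
    then have "y \<in> F (0 \<le> y$i, 0 \<le> y$j)"
      unfolding F_def by simp
    then show "y \<in> (\<Union>\<sigma>. F \<sigma>)"
      by (rule UN_I[OF UNIV_I])
  qed
  have sign_conds: "0 \<le> (if fst \<sigma> then y$i else - y$i)" "0 \<le> (if snd \<sigma> then y$j else - y$j)"
    if "y \<in> F \<sigma>" for y \<sigma>
    using that unfolding F_def mem_Collect_eq by simp_all
  show "negligible (F \<sigma> \<inter> F \<tau>)" if "\<sigma> \<noteq> \<tau>"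
  proof (cases "fst \<sigma> = fst \<tau>")
    case False
    then have "F \<sigma> \<inter> F \<tau> \<subseteq> {y. y$i = 0}"
      using sign_conds(1)[of _ \<sigma>] sign_conds(1)[of _ \<tau>] by (force split: if_splits)
    then show ?thesis
      by (rule negligible_subset[OF negligible_standard_hyperplane_cart])
  next
    case True
    with that have "snd \<sigma> \<noteq> snd \<tau>"
      by (simp add: prod_eq_iff)
    then have "F \<sigma> \<inter> F \<tau> \<subseteq> {y. y$j = 0}"
      using sign_conds(2)[of _ \<sigma>] sign_conds(2)[of _ \<tau>] by (force split: if_splits)
    then show ?thesis
      by (rule negligible_subset[OF negligible_standard_hyperplane_cart])
  qed
qed

lemma measure_polar_sq_pyramid:
  fixes i j :: "'n::finite" and z :: "real^'n"
  assumes ij: "i \<noteq> j" and z: "z \<in> interior (sq_pyramid i j)"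
  defines "s \<equiv> 1 - (\<Sum>k\<in>-{i,j}. z$k)"
  shows "measure lebesgue (polar ((\<lambda>x. x - z) ` sq_pyramid i j))
    = (1 / z$i + 1 / (s - z$i)) * (1 / z$j + 1 / (s - z$j)) / (s * (\<Prod>k\<in>-{i,j}. z$k) * fact CARD('n))"
proof -
  define K where "K = polar ((\<lambda>x. x - z) ` sq_pyramid i j)"
  define c\<^sub>i where "c\<^sub>i b = (if b then s - z$i else z$i)" for b
  define c\<^sub>j where "c\<^sub>j b = (if b then s - z$j else z$j)" for b
  define D where "D = s * (\<Prod>k\<in>-{i,j}. z$k) * fact CARD('n)"
  define F where "F \<sigma> = {y \<in> K. 0 \<le> (if fst \<sigma> then y$i else - y$i) \<and> 0 \<le> (if snd \<sigma> then y$j else - y$j)}"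
    for \<sigma> :: "bool \<times> bool"
  have quadrant: "F \<sigma> \<in> lmeasurable" for \<sigma>
    unfolding F_def K_def by (rule measure_polar_quadrant(1)[OF ij z])
  have K_eq: "K = (\<Union>\<sigma>. F \<sigma>)"
    unfolding F_def by (rule Union_sign_quadrants[symmetric])
  have overlap: "negligible (F \<sigma> \<inter> F \<tau>)" if "\<sigma> \<noteq> \<tau>" for \<sigma> \<tau>
    unfolding F_def using that by (rule negligible_sign_quadrants_Int)
  have "measure lebesgue K = (\<Sum>\<sigma>\<in>UNIV. measure lebesgue (F \<sigma>))"
    unfolding K_eq using quadrant overlap
    by (intro measure_negligible_finite_Union_image) (auto simp: pairwise_def)
  also have "\<dots> = (\<Sum>\<sigma>\<in>UNIV. 1 / c\<^sub>i (fst \<sigma>) * (1 / c\<^sub>j (snd \<sigma>)) / D)"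
    unfolding F_def K_def c\<^sub>i_def c\<^sub>j_def D_def s_def by (simp only: measure_polar_quadrant(2)[OF ij z])
  also have "\<dots> = (\<Sum>a\<in>UNIV. 1 / c\<^sub>i a) * (\<Sum>b\<in>UNIV. 1 / c\<^sub>j b) / D"
    unfolding sum_product sum.cartesian_product UNIV_Times_UNIV sum_divide_distrib by (simp add: split_def)
  finally show ?thesis
    by (simp add: K_def c\<^sub>i_def c\<^sub>j_def D_def UNIV_bool add.commute)
qed

section \<open>The bound\<close>

lemma four_le_inverse_sum:
  fixes a s :: real
  assumes "0 < a" "a < s"
  shows "4 / s \<le> 1 / a + 1 / (s - a)"
proof -
  have "4 * (a * (s - a)) \<le> s * s"
    using sum_squares_ge_zero[of "2 * a - s" 0] by (simp add: algebra_simps power2_eq_square)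
  then show ?thesis
    using assms by (simp add: field_simps)
qed

lemma succ_power_bound:
  fixes N :: nat
  assumes "3 \<le> N"
  shows "8 * (real N + 1) ^ (N + 1) < 27 * real N ^ (N + 1)"
proof (cases "N \<le> 4")
  case True
  then have "N = 3 \<or> N = 4"
    using assms by auto
  then show ?thesis
    by auto
next
  case False
  then have N: "5 \<le> real N"
    by simp
  have "(1 + 1 / real N) ^ N \<le> exp (1 / real N) ^ N"
    using N by (intro power_mono) simp_all
  also have "\<dots> = exp 1"
    using exp_of_nat_mult[of N "1 / real N"] N by simp
  finally have "(1 + 1 / real N) ^ N < 272 / 100"
    using e_less_272 by linarith
  moreover have "1 + 1 / real N \<le> 6 / 5"
    using N by (simp add: field_simps)
  ultimately have P: "(1 + 1 / real N) ^ N * (1 + 1 / real N) < 272 / 100 * (6 / 5)"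
    by (rule mult_less_le_imp_less) (auto intro: add_pos_nonneg)
  have "real N + 1 = real N * (1 + 1 / real N)"
    using N by (simp add: field_simps)
  then have "8 * (real N + 1) ^ (N + 1) = real N ^ (N + 1) * (8 * ((1 + 1 / real N) ^ N * (1 + 1 / real N)))"
    by (simp add: power_mult_distrib)
  also have "\<dots> < real N ^ (N + 1) * 27"
    using P N by (intro mult_strict_left_mono) auto
  finally show ?thesis
    by simp
qed

lemma exists_interior_polar_measure_eq:
  fixes i j :: "'n::finite"
  assumes ij: "i \<noteq> j"
  shows "\<exists>z \<in> interior (sq_pyramid i j). measure lebesgue (polar ((\<lambda>x. x - z) ` sq_pyramid i j))
           = 16 * (real CARD('n) + 1) ^ (CARD('n) + 1) / (27 * fact CARD('n))"
proof -
  define n where "n = CARD('n)"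
  define A where "A = real n + 1"
  have n: "2 \<le> n" and card_apex: "card (- {i, j}) = n - 2"
    using card_Compl_pair[OF ij] by (simp_all add: n_def)
  then have A: "3 \<le> A"
    by (simp add: A_def)
  \<comment> \<open>for n = 2 this is the centre of the square\<close>
  define z :: "real^'n" where "z = (\<chi> l. if l = i \<or> l = j then 3 / (2 * A) else 1 / A)"
  have z_ij: "z$i = 3 / (2 * A)" "z$j = 3 / (2 * A)" and z_apex: "\<And>k. k \<in> -{i,j} \<Longrightarrow> z$k = 1 / A"
    by (simp_all add: z_def)
  have "(\<Sum>k\<in>-{i,j}. z$k) = (\<Sum>k\<in>-{i,j}. 1 / A)"
    by (rule sum.cong[OF refl z_apex])
  also have "\<dots> = (A - 3) / A"
    using n by (simp add: card_apex A_def)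
  finally have s: "1 - (\<Sum>k\<in>-{i,j}. z$k) = 3 / A"
    using A by (simp add: field_simps)
  have "(\<Prod>k\<in>-{i,j}. z$k) = (\<Prod>k\<in>-{i,j}. 1 / A)"
    by (rule prod.cong[OF refl z_apex])
  then have prod: "(\<Prod>k\<in>-{i,j}. z$k) = 1 / A ^ (n - 2)"
    by (simp add: card_apex power_one_over)
  have "z$i + (\<Sum>k\<in>-{i,j}. z$k) < 1" "z$j + (\<Sum>k\<in>-{i,j}. z$k) < 1"
    using s A unfolding z_ij by (simp_all add: field_simps)
  moreover have "0 < z$l" for l
    using A by (simp add: z_def)
  ultimately have z_int: "z \<in> interior (sq_pyramid i j)"
    unfolding interior_sq_pyramid[OF ij] by simp
  have "1 / (3 / (2 * A)) + 1 / (3 / A - 3 / (2 * A)) = 4 * A / 3"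
    using A by (simp add: field_simps)
  then have "measure lebesgue (polar ((\<lambda>x. x - z) ` sq_pyramid i j))
      = (4 * A / 3) * (4 * A / 3) / (3 / A * (1 / A ^ (n - 2)) * fact n)"
    unfolding measure_polar_sq_pyramid[OF ij z_int] s z_ij prod n_def by simp
  also have "\<dots> = 16 * (A ^ 3 * A ^ (n - 2)) / (27 * fact n)"
    using A by (simp add: field_simps power3_eq_cube)
  also have "A ^ 3 * A ^ (n - 2) = A ^ (n + 1)"
    using n by (simp flip: power_add)
  finally show ?thesis
    using z_int by (auto simp: A_def n_def)
qed

lemma measure_polar_square_ge:
  fixes i j :: "'n::finite" and z :: "real^'n"
  assumes ij: "i \<noteq> j" and n: "CARD('n) = 2" and z: "z \<in> interior (sq_pyramid i j)"
  shows "8 \<le> measure lebesgue (polar ((\<lambda>x. x - z) ` sq_pyramid i j))"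
proof -
  have "- {i, j} = {}"
    using card_Compl_pair(1)[OF ij] n by simp
  then have z_bounds: "0 < z$i" "z$i < 1" "0 < z$j" "z$j < 1"
    using z unfolding interior_sq_pyramid[OF ij] by auto
  have "4 * 4 \<le> (1 / z$i + 1 / (1 - z$i)) * (1 / z$j + 1 / (1 - z$j))"
    using four_le_inverse_sum[of "z$i" 1] four_le_inverse_sum[of "z$j" 1] z_bounds
    by (intro mult_mono) auto
  then show ?thesis
    using \<open>- {i, j} = {}\<close> by (simp add: measure_polar_sq_pyramid[OF ij z] n)
qed

theorem lemma4p10:
  fixes i j :: "'n::finite" and c :: "real^'n"
  assumes "i \<noteq> j"
    and "santalo_point (sq_pyramid i j) c"
  shows "measure lebesgue (sq_pyramid i j) * measure lebesgue (polar ((\<lambda>x. x - c) ` sq_pyramid i j))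
           \<le> 4 * real CARD('n) ^ (CARD('n) + 1) / (fact CARD('n))^2
       \<and> (measure lebesgue (sq_pyramid i j) * measure lebesgue (polar ((\<lambda>x. x - c) ` sq_pyramid i j))
           = 4 * real CARD('n) ^ (CARD('n) + 1) / (fact CARD('n))^2 \<longleftrightarrow> CARD('n) = 2)"
proof -
  define n where "n = CARD('n)"
  define M where "M z = measure lebesgue (polar ((\<lambda>x. x - z) ` sq_pyramid i j))" for z
  obtain z where "z \<in> interior (sq_pyramid i j)" and "M z = 16 * (real n + 1) ^ (n + 1) / (27 * fact n)"
    using exists_interior_polar_measure_eq[OF assms(1)] by (auto simp: M_def n_def)
  then have M_le: "M c \<le> 16 * (real n + 1) ^ (n + 1) / (27 * fact n)"
    using assms(2) by (auto simp: santalo_point_def M_def)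
  have vol: "measure lebesgue (sq_pyramid i j) = 2 / fact n"
    using measure_sq_pyramid[OF assms(1)] by (simp add: n_def)
  have "2 / fact n * M c \<le> 4 * real n ^ (n + 1) / (fact n)^2
      \<and> (2 / fact n * M c = 4 * real n ^ (n + 1) / (fact n)^2 \<longleftrightarrow> n = 2)"
  proof (cases "n = 2")
    case True
    have "8 \<le> M c"
      using measure_polar_square_ge[OF assms(1)] assms(2) True by (simp add: santalo_point_def M_def n_def)
    with M_le True show ?thesis
      by simp
  next
    case False
    then have "3 \<le> n"
      using card_Compl_pair(2)[OF assms(1)] by (simp add: n_def)
    have "2 / fact n * M c \<le> 2 / fact n * (16 * (real n + 1) ^ (n + 1) / (27 * fact n))"
      using M_le by (intro mult_left_mono) auto
    also have "\<dots> < 4 * real n ^ (n + 1) / (fact n)^2"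
      using succ_power_bound[OF \<open>3 \<le> n\<close>] by (simp add: power2_eq_square divide_simps)
    finally show ?thesis
      using False by simp
  qed
  then show ?thesis
    by (simp add: vol M_def n_def)
qed

end
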